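(* Let $G^-,G^+$ be entire functions with $G^-(1/2)=G^+(1/2)$ and $(G^-)'(1/2)\ne(G^+)'(1/2)$, and let $g^\pm(b)=G^-(b)$ for $b<1/2$, $g^\pm(b)=G^+(b)$ for $b\ge1/2$. Then there exists $\rho_0>0$ such that, with $A_0=\,]-1-\rho_0,1+\rho_0[$, the function $\psi_0:A_0\to\mathbb C$, $\psi_0(a)=g^\pm((1+a)/2)$, is a regular $\mathbb C$-supershift on $A_0$. Consequently, the fact that a function $\psi$ is a smooth regular $\mathbb C$-supershift on some open interval $A\subset\mathbb R$ of length strictly larger than $2$ does not in general imply that $\psi$ is real analytic on $A$.
   Context: For an open interval $A\subset\mathbb R$ of length $R>2$ (possibly infinite), set $\mathbb A=\{(a,a')\in\mathbb R\times A:\ a'+[-1,1]\subset A,\ a+a'\in A\}$. For a sequence $\boldsymbol\epsilon=(\epsilon_N)_{N\ge1}$ with $\epsilon_N\in[0,1)$ and $\epsilon_N\to0$, put $h^{\boldsymbol\epsilon}_{N,\nu}=1-2\,\frac{\nu+\epsilon_N(N-\nu)}{N}$ for $0\le\nu\le N$. For a continuous $\psi:A\to\mathbb C$ and $(a,a')\in\mathbb A$ set $$S_N^{\boldsymbol\epsilon}[\psi](a,a')=\sum_{\nu=0}^N\binom N\nu\Big(\frac{1+a}2\Big)^{N-\nu}\Big(\frac{1-a}2\Big)^{\nu}\psi\big(a'+h^{\boldsymbol\epsilon}_{N,\nu}\big).$$ A continuous $\psi:A\to\mathbb C$ is called a regular $\mathbb C$-supershift on $A$ if (1) for every such sequence $\boldsymbol\epsilon$,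 $S_N^{\boldsymbol\epsilon}[\psi](a,a')\to\psi(a+a')$ as $N\to\infty$ uniformly on compact subsets of $\mathbb A$; and (2) for every family $\{\boldsymbol\epsilon_{\iota'}=(\epsilon_{\iota',N})_{N\ge1}:\iota'\in I'\}$ of such sequences with $\sup_{\iota'\in I'}\epsilon_{\iota',N}\to0$ as $N\to\infty$, the convergence in (1) is uniform with respect to $\iota'\in I'$ on each compact subset of $\mathbb A$. *)

theory Defs
  imports "HOL-Analysis.Analysis" "HOL-Complex_Analysis.Complex_Analysis"
begin

definition shift_h :: "(nat \<Rightarrow> real) \<Rightarrow> nat \<Rightarrow> nat \<Rightarrow> real" where
  "shift_h eps N \<nu> = 1 - 2 * (real \<nu> + eps N * (real N - real \<nu>)) / real N"

definition supershift_S ::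
  "(nat \<Rightarrow> real) \<Rightarrow> (real \<Rightarrow> complex) \<Rightarrow> nat \<Rightarrow> real \<Rightarrow> real \<Rightarrow> complex" where
  "supershift_S eps psi N a a' =
     (\<Sum>\<nu> = 0..N. complex_of_real (real (N choose \<nu>) * ((1 + a) / 2) ^ (N - \<nu>) * ((1 - a) / 2) ^ \<nu>)
                   * psi (a' + shift_h eps N \<nu>))"

definition dom_A :: "real set \<Rightarrow> (real \<times> real) set" where
  "dom_A A = {(a, a'). a' \<in> A \<and> {a' - 1 .. a' + 1} \<subseteq> A \<and> a + a' \<in> A}"

definition admissible_seq :: "(nat \<Rightarrow> real) \<Rightarrow> bool" where
  "admissible_seq eps \<longleftrightarrow> (\<forall>N\<ge>1. 0 \<le> eps N \<and> eps N < 1) \<and> eps \<longlonglongrightarrow> 0"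

definition regular_C_supershift :: "real set \<Rightarrow> (real \<Rightarrow> complex) \<Rightarrow> bool" where
  "regular_C_supershift A psi \<longleftrightarrow>
     continuous_on A psi \<and>
     (\<forall>eps. admissible_seq eps \<longrightarrow>
        (\<forall>K. compact K \<and> K \<subseteq> dom_A A \<longrightarrow>
           uniform_limit K (\<lambda>N (a, a'). supershift_S eps psi N a a')
                           (\<lambda>(a, a'). psi (a + a')) sequentially)) \<and>
     (\<forall>E :: (nat \<Rightarrow> real) set.
        (\<forall>eps\<in>E. admissible_seq eps) \<and>
        (\<forall>\<delta>>0. \<forall>\<^sub>F N in sequentially. \<forall>eps\<in>E. eps N < \<delta>) \<longrightarrow>
        (\<forall>K. compact K \<and> K \<subseteq> dom_A A \<longrightarrow>
           (\<forall>e>0. \<forall>\<^sub>F N in sequentially. \<forall>eps\<in>E. \<forall>(a, a')\<in>K.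
               norm (supershift_S eps psi N a a' - psi (a + a')) < e)))"

end

theory Submission
  imports Defs "HOL-Computational_Algebra.Formal_Power_Series"
begin

text \<open>Write H_\<pm>(z) = G_\<pm>((1 + z)/2), so that the glued function psi equals H_- on t < 0 and
  H_+ on t \<ge> 0; it is continuous, but its one-sided derivatives at 0 differ.

  S_N is an average of psi over the grid a' + h_\<nu> with the binomial weights of parameter
  (1 - a)/2. The moments of this average are coefficients of the generating function
  e^((y - \<epsilon>)t) (p e^(ct) + q e^(-ct))^N with c = (1 - \<epsilon>)/N, and a comparison of majorant series
  shows that the k-th moment is within 8 k! 5^k (1/N + \<epsilon>) of (y + a)^k. Summing against the
  Taylor series gives uniform convergence for every entire function. For |a| \<le> 1 the weights
  form a probability distribution, and the Bernstein argument with the second moment gives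
  uniform convergence for every continuous function, in particular for psi. For 1 \<le> |a| the
  weights are signed; but when \<rho>0 = 1/30 the only grid points on the wrong side of 0 carry
  weights of size at most (31/45)^N, so psi can be replaced by the entire function H_+ (or H_-)
  at an exponentially small cost.\<close>

section \<open>Majorants of formal power series\<close>

definition fps_majorant :: "real fps \<Rightarrow> real fps \<Rightarrow> bool" where
  "fps_majorant f g \<longleftrightarrow> (\<forall>n. \<bar>f $ n\<bar> \<le> g $ n)"

lemma fps_majorant_mult:
  assumes "fps_majorant f F" "fps_majorant g G"
  shows "fps_majorant (f * g) (F * G)"
  unfolding fps_majorant_def
proof
  fix n
  have "\<bar>(f * g) $ n\<bar> \<le> (\<Sum>i=0..n. \<bar>f $ i * g $ (n - i)\<bar>)"
    unfolding fps_mult_nth by (rule sum_abs)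
  also have "\<dots> \<le> (\<Sum>i=0..n. F $ i * G $ (n - i))"
    using assms unfolding fps_majorant_def abs_mult
    by (intro sum_mono mult_mono) (auto intro: order_trans[OF abs_ge_zero])
  finally show "\<bar>(f * g) $ n\<bar> \<le> (F * G) $ n"
    unfolding fps_mult_nth .
qed

lemma fps_majorant_one: "fps_majorant 1 1"
  unfolding fps_majorant_def by (simp add: fps_one_nth)

lemma fps_majorant_power: "fps_majorant f F \<Longrightarrow> fps_majorant (f ^ n) (F ^ n)"
  by (induction n) (auto simp: fps_majorant_one fps_majorant_mult)

lemma fps_majorant_sum:
  assumes "\<And>i. i \<in> S \<Longrightarrow> fps_majorant (f i) (F i)"
  shows "fps_majorant (sum f S) (sum F S)"
  unfolding fps_majorant_def fps_sum_nth
proof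
  fix n
  have "\<bar>\<Sum>i\<in>S. f i $ n\<bar> \<le> (\<Sum>i\<in>S. \<bar>f i $ n\<bar>)"
    by (rule sum_abs)
  also have "\<dots> \<le> (\<Sum>i\<in>S. F i $ n)"
    using assms unfolding fps_majorant_def by (intro sum_mono) auto
  finally show "\<bar>\<Sum>i\<in>S. f i $ n\<bar> \<le> (\<Sum>i\<in>S. F i $ n)" .
qed

lemma fps_majorant_exp: "\<bar>t\<bar> \<le> T \<Longrightarrow> fps_majorant (fps_exp t) (fps_exp T)"
  unfolding fps_majorant_def
  by (auto simp: abs_divide power_abs intro!: divide_right_mono power_mono)

lemma fps_majorant_power_diff:
  assumes "fps_majorant f F" "fps_majorant g F" "fps_majorant (f - g) R"
  shows "fps_majorant (f ^ N - g ^ N) (R * (of_nat N * F ^ (N - 1)))"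
proof -
  have "fps_majorant ((f - g) * (\<Sum>i<N. g ^ (N - Suc i) * f ^ i)) (R * (\<Sum>i<N. F ^ (N - Suc i) * F ^ i))"
    using assms by (intro fps_majorant_mult fps_majorant_sum fps_majorant_power) auto
  moreover have "(\<Sum>i<N. F ^ (N - Suc i) * F ^ i) = of_nat N * F ^ (N - 1)"
    by (simp flip: power_add)
  ultimately show ?thesis
    by (simp only: power_diff_sumr2)
qed

lemma fps_majorant_coeff_bound:
  assumes "fps_majorant h (fps_const C * (fps_X ^ 2 * fps_exp Y))" "0 \<le> C" "0 \<le> Y" "Y \<le> 5"
  shows "\<bar>h $ k\<bar> \<le> C * 5 ^ k"
proof -
  have "(if k < 2 then 0 else Y ^ (k - 2) / fact (k - 2)) \<le> (5::real) ^ k"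
  proof (cases "k < 2")
    case False
    have "Y ^ (k - 2) / fact (k - 2) \<le> Y ^ (k - 2)"
      using assms(3) by (simp add: divide_le_eq fact_ge_1 mult_le_cancel_left1)
    also have "\<dots> \<le> 5 ^ k"
      using assms(3,4) power_increasing[of "k - 2" k "5::real"] power_mono[of Y 5 "k - 2"]
      by (meson diff_le_self one_le_numeral order_trans)
    finally show ?thesis
      using False by simp
  qed simp
  moreover have "\<bar>h $ k\<bar> \<le> C * (if k < 2 then 0 else Y ^ (k - 2) / fact (k - 2))"
    using spec[OF assms(1)[unfolded fps_majorant_def], of k]
    by (cases "k < 2") (simp_all add: fps_X_power_mult_nth)
  ultimately show ?thesis
    using assms(2) by (meson mult_left_mono order_trans)
qed

section \<open>Moments of the shifted binomial weights\<close>

lemma supershift_S_Bernstein: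
  "supershift_S eps psi N a a' =
     (\<Sum>\<nu>\<le>N. complex_of_real (Bernstein N \<nu> ((1 - a) / 2)) * psi (a' + shift_h eps N \<nu>))"
proof -
  have "Bernstein N \<nu> ((1 - a) / 2) = real (N choose \<nu>) * ((1 + a) / 2) ^ (N - \<nu>) * ((1 - a) / 2) ^ \<nu>" for \<nu>
    unfolding Bernstein_def by (simp add: field_simps)
  then show ?thesis
    unfolding supershift_S_def atLeast0AtMost by presburger
qed

lemma shift_h_bounds:
  assumes "N \<ge> 1" "0 \<le> eps N" "eps N < 1" "\<nu> \<le> N"
  shows "\<bar>shift_h eps N \<nu>\<bar> \<le> 1"
proof -
  define s where "s = real \<nu> + eps N * (real N - real \<nu>)"
  have "eps N * (real N - real \<nu>) \<le> real N - real \<nu>"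
    using assms(2-4) by (simp add: mult_left_le_one_le)
  then have "0 \<le> s / real N" "s / real N \<le> 1"
    using assms unfolding s_def by (auto simp: divide_le_eq)
  moreover have "shift_h eps N \<nu> = 1 - 2 * (s / real N)"
    unfolding shift_h_def s_def by simp
  ultimately show ?thesis
    by linarith
qed

lemma Bernstein_shift_exp_fps:
  fixes eps :: "nat \<Rightarrow> real"
  assumes N: "N \<ge> 1"
  defines "c \<equiv> (1 - eps N) / real N"
  shows "(\<Sum>\<nu>\<le>N. fps_const (Bernstein N \<nu> x) * fps_exp (y + shift_h eps N \<nu>))
       = fps_exp (y - eps N) * (fps_const (1 - x) * fps_exp c + fps_const x * fps_exp (-c)) ^ N"
proof -
  let ?E = "fps_exp :: real \<Rightarrow> real fps"
  have Bernstein_term: "fps_const (Bernstein N \<nu> x) * ?E (y + shift_h eps N \<nu>) =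
     ?E (y - eps N) * (of_nat (N choose \<nu>) * (fps_const x * ?E (-c)) ^ \<nu> * (fps_const (1 - x) * ?E c) ^ (N - \<nu>))"
    if "\<nu> \<le> N" for \<nu>
  proof -
    have arg: "y + shift_h eps N \<nu> = (y - eps N) + (of_nat \<nu> * (-c) + of_nat (N - \<nu>) * c)"
      using that N unfolding c_def shift_h_def by (simp add: of_nat_diff field_simps)
    have "?E (y - eps N) * (of_nat (N choose \<nu>) * (fps_const x * ?E (-c)) ^ \<nu> * (fps_const (1 - x) * ?E c) ^ (N - \<nu>))
       = fps_const (Bernstein N \<nu> x) * (?E (y - eps N) * (?E (-c) ^ \<nu> * ?E c ^ (N - \<nu>)))"
      unfolding Bernstein_def
      by (simp add: power_mult_distrib fps_const_power fps_of_nat[symmetric] mult_ac)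
    also have "\<dots> = fps_const (Bernstein N \<nu> x) * ?E (y + shift_h eps N \<nu>)"
      unfolding fps_exp_power_mult arg fps_exp_add_mult[symmetric] by (simp add: mult_ac)
    finally show ?thesis
      by simp
  qed
  have "(fps_const (1 - x) * ?E c + fps_const x * ?E (-c)) ^ N =
      (\<Sum>\<nu>\<le>N. of_nat (N choose \<nu>) * (fps_const x * ?E (-c)) ^ \<nu> * (fps_const (1 - x) * ?E c) ^ (N - \<nu>))"
    by (subst add.commute) (rule binomial_ring)
  then show ?thesis
    by (simp add: sum_distrib_left Bernstein_term)
qed

lemma Bernstein_shift_moment_fps:
  assumes "N \<ge> 1"
  shows "(\<Sum>\<nu>\<le>N. Bernstein N \<nu> x * (y + shift_h eps N \<nu>) ^ k)
      = fact k * (fps_exp (y - eps N) * (fps_const (1 - x) * fps_exp ((1 - eps N) / real N)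
           + fps_const x * fps_exp (-((1 - eps N) / real N))) ^ N) $ k"
  unfolding Bernstein_shift_exp_fps[OF assms, symmetric] fps_sum_nth
  by (simp add: sum_distrib_left)

lemma fps_majorant_two_point_exp:
  assumes "p + q = 1" "\<bar>p - q\<bar> \<le> 2" "0 \<le> c"
  shows "fps_majorant (fps_const p * fps_exp c + fps_const q * fps_exp (-c)) (fps_exp (2 * c))"
  unfolding fps_majorant_def
proof
  fix n
  have "\<bar>p * c ^ n + q * (-c) ^ n\<bar> \<le> (2 * c) ^ n"
  proof (cases n)
    case 0
    then show ?thesis using assms(1) by simp
  next
    case (Suc m)
    have "\<bar>p * c ^ n + q * (-c) ^ n\<bar> \<le> (\<bar>p\<bar> + \<bar>q\<bar>) * c ^ n"
      using assms(3) by (auto simp: abs_mult power_abs distrib_right intro: order_trans[OF abs_triangle_ineq])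
    also have "\<dots> \<le> 2 * c ^ n"
      using assms by (intro mult_right_mono) auto
    also have "\<dots> \<le> 2 ^ n * c ^ n"
      using Suc assms(3) by (intro mult_right_mono) (auto simp: self_le_power)
    finally show ?thesis
      by (simp add: power_mult_distrib)
  qed
  then show "\<bar>(fps_const p * fps_exp c + fps_const q * fps_exp (-c)) $ n\<bar> \<le> fps_exp (2 * c) $ n"
    by (simp add: abs_divide add_divide_distrib[symmetric] divide_right_mono)
qed

lemma abs_two_point_power_diff_le:
  fixes p q c :: real
  assumes pq: "p + q = 1" "\<bar>p - q\<bar> \<le> 2" and c: "0 \<le> c" and n: "n = m + 2"
  shows "\<bar>p * c ^ n + q * (-c) ^ n - ((p - q) * c) ^ n\<bar> \<le> 8 * c\<^sup>2 * (2 * c) ^ m"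
proof -
  have "\<bar>p * c ^ n + q * (-c) ^ n\<bar> \<le> (\<bar>p\<bar> + \<bar>q\<bar>) * c ^ n"
    using c by (auto simp: abs_mult power_abs distrib_right intro: order_trans[OF abs_triangle_ineq])
  then have "\<bar>p * c ^ n + q * (-c) ^ n - ((p - q) * c) ^ n\<bar> \<le> (\<bar>p\<bar> + \<bar>q\<bar>) * c ^ n + \<bar>p - q\<bar> ^ n * c ^ n"
    using c abs_triangle_ineq4[of "p * c ^ n + q * (-c) ^ n" "((p - q) * c) ^ n"]
    by (simp add: power_abs power_mult_distrib abs_mult)
  also have "\<dots> \<le> 2 * c ^ n + 2 ^ n * c ^ n"
    using pq c by (intro add_mono mult_right_mono power_mono) auto
  also have "\<dots> \<le> 8 * (2 ^ m * c ^ n)"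
  proof -
    have "c ^ n \<le> 2 ^ m * c ^ n" "0 \<le> 2 ^ m * c ^ n"
      using c mult_right_mono[OF one_le_power[of "2::real" m], of "c ^ n"] by simp_all
    moreover have "(2::real) ^ n = 4 * 2 ^ m"
      unfolding n by (simp add: power_add)
    ultimately show ?thesis
      by (simp add: mult.commute)
  qed
  also have "\<dots> = 8 * c\<^sup>2 * (2 * c) ^ m"
    unfolding n by (simp add: power_add power_mult_distrib power2_eq_square)
  finally show ?thesis .
qed

text \<open>The coefficients of order 0 and 1 cancel because p + q = 1; this is what makes the
  moments converge at rate 1/N.\<close>
lemma fps_majorant_two_point_exp_diff:
  assumes pq: "p + q = 1" "\<bar>p - q\<bar> \<le> 2" and c: "0 \<le> c"
  shows "fps_majorant (fps_const p * fps_exp c + fps_const q * fps_exp (-c) - fps_exp ((p - q) * c))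
           (fps_const (8 * c\<^sup>2) * (fps_X\<^sup>2 * fps_exp (2 * c)))"
  unfolding fps_majorant_def
proof
  fix n
  let ?d = "p * c ^ n + q * (-c) ^ n - ((p - q) * c) ^ n"
  have coeff: "(fps_const p * fps_exp c + fps_const q * fps_exp (-c) - fps_exp ((p - q) * c)) $ n = ?d / fact n"
    by (simp add: diff_divide_distrib add_divide_distrib)
  consider "n < 2" | m where "n = m + 2"
    by (metis add_diff_inverse_nat add.commute)
  then show "\<bar>(fps_const p * fps_exp c + fps_const q * fps_exp (-c) - fps_exp ((p - q) * c)) $ n\<bar>
      \<le> (fps_const (8 * c\<^sup>2) * (fps_X\<^sup>2 * fps_exp (2 * c))) $ n"
  proof cases
    case 1
    then have "?d = 0"
      using pq(1) less_2_cases[of n] by (auto simp: algebra_simps)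
    with 1 show ?thesis
      unfolding coeff by (simp add: fps_X_power_mult_nth)
  next
    case (2 m)
    then have "\<bar>?d\<bar> / fact n \<le> 8 * c\<^sup>2 * (2 * c) ^ m / fact m"
      using abs_two_point_power_diff_le[OF pq c 2] c by (intro frac_le fact_mono) auto
    moreover have "(fps_const (8 * c\<^sup>2) * (fps_X\<^sup>2 * fps_exp (2 * c))) $ n = 8 * c\<^sup>2 * (2 * c) ^ m / fact m"
      unfolding 2 by (simp add: fps_X_power_mult_nth)
    ultimately show ?thesis
      unfolding coeff by (simp add: abs_divide)
  qed
qed

lemma abs_power_diff_le:
  fixes u v M :: real
  assumes "\<bar>u\<bar> \<le> M" "\<bar>v\<bar> \<le> M"
  shows "\<bar>u ^ k - v ^ k\<bar> \<le> real k * M ^ (k - 1) * \<bar>u - v\<bar>"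
proof -
  have "\<bar>\<Sum>i<k. v ^ (k - Suc i) * u ^ i\<bar> \<le> (\<Sum>i<k. M ^ (k - Suc i) * M ^ i)"
    using assms by (intro order_trans[OF sum_abs] sum_mono)
      (auto simp: abs_mult power_abs intro!: mult_mono power_mono)
  also have "\<dots> = real k * M ^ (k - 1)"
    by (simp flip: power_add)
  finally show ?thesis
    by (simp add: power_diff_sumr2 abs_mult mult_left_mono mult.commute)
qed

lemma Bernstein_shift_moment_bound:
  assumes N: "N \<ge> 1" and e: "0 \<le> eps N" "eps N < 1" and a: "\<bar>a\<bar> \<le> 2" and y: "\<bar>y\<bar> \<le> 2"
  shows "\<bar>\<Sum>\<nu>\<le>N. Bernstein N \<nu> ((1 - a) / 2) * (y + shift_h eps N \<nu>) ^ k\<bar> \<le> 5 ^ k"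
proof -
  let ?E = "fps_exp :: real \<Rightarrow> real fps"
  define c where "c = (1 - eps N) / real N"
  define f where "f = fps_const (1 - (1 - a) / 2) * ?E c + fps_const ((1 - a) / 2) * ?E (-c)"
  define Y where "Y = \<bar>y - eps N\<bar> + 2 * c * real N"
  have c: "0 \<le> c" "c * real N = 1 - eps N"
    using N e unfolding c_def by auto
  have Y: "0 \<le> Y" "Y \<le> 5"
    using c e y unfolding Y_def by auto
  have "fps_majorant (?E (y - eps N) * f ^ N) (?E \<bar>y - eps N\<bar> * ?E (2 * c) ^ N)"
    unfolding f_def using a c
    by (intro fps_majorant_mult fps_majorant_power fps_majorant_two_point_exp fps_majorant_exp) auto
  also have "?E \<bar>y - eps N\<bar> * ?E (2 * c) ^ N = ?E Y"
    unfolding fps_exp_power_mult Y_def fps_exp_add_mult by (simp add: mult_ac)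
  finally have "\<bar>(?E (y - eps N) * f ^ N) $ k\<bar> \<le> Y ^ k / fact k"
    unfolding fps_majorant_def by simp
  then have "\<bar>fact k * (?E (y - eps N) * f ^ N) $ k\<bar> \<le> Y ^ k"
    by (simp add: abs_mult field_simps)
  also have "\<dots> \<le> 5 ^ k"
    using Y by (intro power_mono) auto
  finally show ?thesis
    unfolding Bernstein_shift_moment_fps[OF N] f_def c_def .
qed

lemma coeff_two_point_power_diff_le:
  fixes p q c z :: real
  assumes pq: "p + q = 1" "\<bar>p - q\<bar> \<le> 2" and N: "N \<ge> 1"
    and c: "0 \<le> c" "c \<le> 1 / real N" and z: "\<bar>z\<bar> + 2 * c * real N \<le> 5"
  shows "\<bar>(fps_exp z * ((fps_const p * fps_exp c + fps_const q * fps_exp (-c)) ^ N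
            - fps_exp ((p - q) * c) ^ N)) $ k\<bar> \<le> 8 / real N * 5 ^ k"
proof -
  let ?E = "fps_exp :: real \<Rightarrow> real fps"
  define Y where "Y = \<bar>z\<bar> + 2 * c * real N"
  have "fps_majorant ((fps_const p * ?E c + fps_const q * ?E (-c)) ^ N - ?E ((p - q) * c) ^ N)
      (fps_const (8 * c\<^sup>2) * (fps_X\<^sup>2 * ?E (2 * c)) * (of_nat N * ?E (2 * c) ^ (N - 1)))"
    using pq c(1)
    by (intro fps_majorant_power_diff fps_majorant_two_point_exp fps_majorant_two_point_exp_diff fps_majorant_exp)
      (auto simp: abs_mult mult_right_mono)
  then have "fps_majorant (?E z * ((fps_const p * ?E c + fps_const q * ?E (-c)) ^ N - ?E ((p - q) * c) ^ N))
      (?E \<bar>z\<bar> * (fps_const (8 * c\<^sup>2) * (fps_X\<^sup>2 * ?E (2 * c)) * (of_nat N * ?E (2 * c) ^ (N - 1))))"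
    by (intro fps_majorant_mult fps_majorant_exp) auto
  also have "?E \<bar>z\<bar> * (fps_const (8 * c\<^sup>2) * (fps_X\<^sup>2 * ?E (2 * c)) * (of_nat N * ?E (2 * c) ^ (N - 1)))
      = fps_const (8 * c\<^sup>2 * real N) * (fps_X\<^sup>2 * ?E Y)"
  proof -
    have "?E \<bar>z\<bar> * ?E (2 * c) * ?E (2 * c) ^ (N - 1) = ?E Y"
      unfolding fps_exp_power_mult Y_def fps_exp_add_mult[symmetric]
      using N by (simp add: of_nat_diff algebra_simps)
    then show ?thesis
      by (simp only: fps_of_nat[symmetric] fps_const_mult[symmetric] mult_ac flip: \<open>?E \<bar>z\<bar> * ?E (2 * c) * ?E (2 * c) ^ (N - 1) = ?E Y\<close>)
  qed
  finally have "\<bar>(?E z * ((fps_const p * ?E c + fps_const q * ?E (-c)) ^ N - ?E ((p - q) * c) ^ N)) $ k\<bar>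
      \<le> 8 * c\<^sup>2 * real N * 5 ^ k"
    using c z unfolding Y_def by (intro fps_majorant_coeff_bound) auto
  also have "\<dots> \<le> 8 / real N * 5 ^ k"
  proof -
    have "c\<^sup>2 * real N \<le> (1 / real N)\<^sup>2 * real N"
      using c by (intro mult_right_mono power_mono) auto
    then have "(c\<^sup>2 * real N) * (8 * 5 ^ k) \<le> (1 / real N) * (8 * 5 ^ k)"
      using N by (intro mult_right_mono) (auto simp: power2_eq_square)
    then show ?thesis
      by (simp add: mult_ac)
  qed
  finally show ?thesis .
qed

lemma abs_power_perturbation_le:
  fixes y a e :: real
  assumes e: "0 \<le> e" "e < 1" and a: "\<bar>a\<bar> \<le> 2" and y: "\<bar>y\<bar> \<le> 2"
  shows "\<bar>(y - e + a * (1 - e)) ^ k - (y + a) ^ k\<bar> \<le> 8 * fact k * 5 ^ k * e"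
proof -
  have "\<bar>a * (1 - e)\<bar> \<le> 2 * 1"
    unfolding abs_mult using a e by (intro mult_mono) auto
  then have "\<bar>(y - e + a * (1 - e)) ^ k - (y + a) ^ k\<bar> \<le> real k * 5 ^ (k - 1) * \<bar>(y - e + a * (1 - e)) - (y + a)\<bar>"
    using e y a abs_triangle_ineq[of "y - e" "a * (1 - e)"] by (intro abs_power_diff_le) linarith+
  also have "(y - e + a * (1 - e)) - (y + a) = - (e * (1 + a))"
    by (simp add: algebra_simps)
  also have "\<bar>- (e * (1 + a))\<bar> = e * \<bar>1 + a\<bar>"
    using e by (simp add: abs_mult)
  also have "real k * 5 ^ (k - 1) * (e * \<bar>1 + a\<bar>) \<le> fact k * 5 ^ k * (e * 8)"
  proof (rule mult_mono)
    have "real k \<le> fact k"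
      by (metis fact_ge_self of_nat_fact of_nat_le_iff)
    moreover have "(5::real) ^ (k - 1) \<le> 5 ^ k"
      by (intro power_increasing) auto
    ultimately show "real k * 5 ^ (k - 1) \<le> fact k * 5 ^ k"
      by (rule mult_mono) auto
    show "e * \<bar>1 + a\<bar> \<le> e * 8"
      using a e by (intro mult_left_mono) auto
  qed (use e in auto)
  finally show ?thesis
    by (simp add: mult_ac)
qed

lemma Bernstein_shift_moment_error:
  assumes N: "N \<ge> 1" and e: "0 \<le> eps N" "eps N < 1" and a: "\<bar>a\<bar> \<le> 2" and y: "\<bar>y\<bar> \<le> 2"
  shows "\<bar>(\<Sum>\<nu>\<le>N. Bernstein N \<nu> ((1 - a) / 2) * (y + shift_h eps N \<nu>) ^ k) - (y + a) ^ k\<bar>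
           \<le> 8 * fact k * 5 ^ k * (1 / real N + eps N)"
proof -
  let ?E = "fps_exp :: real \<Rightarrow> real fps"
  define c where "c = (1 - eps N) / real N"
  define f where "f = fps_const (1 - (1 - a) / 2) * ?E c + fps_const ((1 - a) / 2) * ?E (-c)"
  define u where "u = y - eps N + a * (1 - eps N)"
  have c: "0 \<le> c" "c * real N = 1 - eps N" "c \<le> 1 / real N"
    using N e unfolding c_def by (auto simp: divide_right_mono)
  have pq: "1 - (1 - a) / 2 + (1 - a) / 2 = 1" "1 - (1 - a) / 2 - (1 - a) / 2 = a"
    by (simp_all add: field_simps)
  have "2 * c * real N = 2 - 2 * eps N"
    using c(2) by (simp add: mult.assoc)
  moreover have "\<bar>y - eps N\<bar> + (2 - 2 * eps N) \<le> 5"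
    using e y by arith
  ultimately have "\<bar>y - eps N\<bar> + 2 * c * real N \<le> 5"
    by simp
  then have "\<bar>(?E (y - eps N) * (f ^ N - ?E (a * c) ^ N)) $ k\<bar> \<le> 8 / real N * 5 ^ k"
    using coeff_two_point_power_diff_le[OF pq(1) _ N c(1,3)] a unfolding f_def pq(2) by simp
  then have main: "\<bar>fact k * (?E (y - eps N) * (f ^ N - ?E (a * c) ^ N)) $ k\<bar> \<le> fact k * (8 / real N * 5 ^ k)"
    unfolding abs_mult abs_of_nonneg[OF fact_ge_zero] by (intro mult_left_mono) auto
  have "?E (y - eps N) * ?E (a * c) ^ N = ?E u"
    using c(2) unfolding fps_exp_power_mult u_def fps_exp_add_mult[symmetric] by (simp add: mult_ac)
  then have "(\<Sum>\<nu>\<le>N. Bernstein N \<nu> ((1 - a) / 2) * (y + shift_h eps N \<nu>) ^ k) - (y + a) ^ k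
      = fact k * (?E (y - eps N) * (f ^ N - ?E (a * c) ^ N)) $ k + (u ^ k - (y + a) ^ k)"
    unfolding Bernstein_shift_moment_fps[OF N] f_def c_def by (simp add: algebra_simps)
  then show ?thesis
    using main abs_power_perturbation_le[OF e a y, of k] unfolding u_def[symmetric]
      abs_triangle_ineq[of "fact k * (?E (y - eps N) * (f ^ N - ?E (a * c) ^ N)) $ k" "u ^ k - (y + a) ^ k"]
    by (simp add: algebra_simps)
qed

section \<open>Entire functions\<close>

lemma eventually_uniformly_small:
  assumes "\<forall>\<delta>>0. eventually (\<lambda>N. \<forall>eps\<in>E. eps N < \<delta>) sequentially" "\<delta> > 0"
  shows "eventually (\<lambda>N. N \<ge> 1 \<and> (\<forall>eps\<in>E. 1 / real N + eps N < \<delta>)) sequentially"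
proof -
  have "eventually (\<lambda>N. 1 / real N < \<delta> / 2) sequentially"
    using order_tendstoD(2)[OF lim_1_over_n, of "\<delta> / 2"] assms(2) by simp
  moreover have "eventually (\<lambda>N. \<forall>eps\<in>E. eps N < \<delta> / 2) sequentially"
    using assms(1)[rule_format, of "\<delta> / 2"] assms(2) by simp
  ultimately show ?thesis
    using eventually_ge_at_top[of 1] by eventually_elim auto
qed

lemma abs_mult_min_le:
  fixes c x y :: real
  assumes "0 \<le> c" "0 \<le> x" "0 \<le> y"
  shows "\<bar>c * min x y\<bar> \<le> c * x"
  using assms by (simp add: abs_mult mult_left_mono)

text \<open>The k-th Taylor term is bounded both trivially, by 2 \<cdot> 5^k, and by the moment error.\<close>
definition entire_supershift_error :: "(complex \<Rightarrow> complex) \<Rightarrow> real \<Rightarrow> real" where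
  "entire_supershift_error H \<delta> =
     (\<Sum>k. norm ((deriv ^^ k) H 0 / fact k) * min (2 * 5 ^ k) (8 * fact k * 5 ^ k * \<delta>))"

lemma entire_taylor_sums:
  assumes "H holomorphic_on UNIV"
  shows "(\<lambda>k. (deriv ^^ k) H 0 / fact k * z ^ k) sums H z"
  using holomorphic_power_series[of H 0 "norm z + 1" z] holomorphic_on_subset[OF assms] by simp

lemma entire_taylor_summable:
  assumes "H holomorphic_on UNIV" "0 \<le> r"
  shows "summable (\<lambda>k. norm ((deriv ^^ k) H 0 / fact k) * r ^ k)"
proof -
  have "summable (\<lambda>k. (deriv ^^ k) H 0 / fact k * of_real (\<bar>r\<bar> + 1) ^ k)"
    using entire_taylor_sums[OF assms(1)] by (rule sums_summable)
  from powser_insidea[OF this, of "of_real r"] show ?thesis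
    using assms(2) by (simp add: norm_mult norm_divide norm_power)
qed

lemma norm_supershift_S_entire_le:
  fixes H :: "complex \<Rightarrow> complex"
  assumes H: "H holomorphic_on UNIV"
    and N: "N \<ge> 1" and e: "0 \<le> eps N" "eps N < 1" and a: "\<bar>a\<bar> \<le> 2" "\<bar>a'\<bar> \<le> 2"
  shows "norm (supershift_S eps (\<lambda>t. H (of_real t)) N a a' - H (of_real (a + a')))
           \<le> entire_supershift_error H (1 / real N + eps N)"
proof -
  define c where "c k = (deriv ^^ k) H 0 / fact k" for k
  define P where "P k = (\<Sum>\<nu>\<le>N. Bernstein N \<nu> ((1 - a) / 2) * (a' + shift_h eps N \<nu>) ^ k)" for k
  define g where "g k = norm (c k) * min (2 * 5 ^ k) (8 * fact k * 5 ^ k * (1 / real N + eps N))" for k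
  have "(\<lambda>k. \<Sum>\<nu>\<le>N. of_real (Bernstein N \<nu> ((1 - a) / 2)) * (c k * of_real (a' + shift_h eps N \<nu>) ^ k))
      sums supershift_S eps (\<lambda>t. H (of_real t)) N a a'"
    unfolding supershift_S_Bernstein c_def by (intro sums_sum sums_mult entire_taylor_sums[OF H])
  moreover have "(\<lambda>k. c k * of_real ((a + a') ^ k)) sums H (of_real (a + a'))"
    using entire_taylor_sums[OF H, of "of_real (a + a')"] unfolding c_def by simp
  ultimately have sums: "(\<lambda>k. c k * of_real (P k - (a + a') ^ k))
      sums (supershift_S eps (\<lambda>t. H (of_real t)) N a a' - H (of_real (a + a')))"
    unfolding P_def by (simp add: sums_diff sum_distrib_left right_diff_distrib mult_ac)
  have bound: "norm (c k * of_real (P k - (a + a') ^ k)) \<le> g k" for k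
  proof -
    have "\<bar>P k - (a + a') ^ k\<bar> \<le> \<bar>P k\<bar> + \<bar>a + a'\<bar> ^ k"
      by (metis abs_triangle_ineq4 power_abs)
    also have "\<dots> \<le> 5 ^ k + 5 ^ k"
      unfolding P_def using N e a by (intro add_mono Bernstein_shift_moment_bound power_mono) auto
    finally have "\<bar>P k - (a + a') ^ k\<bar> \<le> min (2 * 5 ^ k) (8 * fact k * 5 ^ k * (1 / real N + eps N))"
      using Bernstein_shift_moment_error[of N eps a a' k] N e a unfolding P_def by (simp add: add.commute)
    then show ?thesis
      unfolding g_def norm_mult norm_of_real by (intro mult_left_mono) auto
  qed
  have g: "summable g"
  proof (rule summable_comparison_test'[where N = 0])
    have "summable (\<lambda>k. norm (c k) * 5 ^ k)"
      unfolding c_def by (rule entire_taylor_summable[OF H]) simp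
    then show "summable (\<lambda>k. 2 * (norm (c k) * 5 ^ k))"
      by (rule summable_mult)
    show "norm (g k) \<le> 2 * (norm (c k) * 5 ^ k)" for k
      using abs_mult_min_le[of "norm (c k)" "2 * 5 ^ k" "8 * fact k * 5 ^ k * (1 / real N + eps N)"] e
      unfolding g_def by (simp add: mult_ac)
  qed
  have "summable (\<lambda>k. norm (c k * of_real (P k - (a + a') ^ k)))"
    using bound by (intro summable_comparison_test'[OF g]) auto
  then have "norm (supershift_S eps (\<lambda>t. H (of_real t)) N a a' - H (of_real (a + a')))
      \<le> (\<Sum>k. norm (c k * of_real (P k - (a + a') ^ k)))"
    using summable_norm sums_unique[OF sums] by metis
  also have "\<dots> \<le> suminf g"
    using bound g by (intro suminf_le) (auto intro: summable_comparison_test'[OF g])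
  finally show ?thesis
    unfolding entire_supershift_error_def g_def c_def .
qed

lemma entire_supershift_error_tendsto:
  assumes H: "H holomorphic_on UNIV"
  shows "(entire_supershift_error H \<longlongrightarrow> 0) (at_right 0)"
proof -
  define c where "c k = norm ((deriv ^^ k) H 0 / fact k)" for k
  have "((\<lambda>\<delta>. \<Sum>k. c k * min (2 * 5 ^ k) (8 * fact k * 5 ^ k * \<delta>)) \<longlongrightarrow> (\<Sum>k. 0)) (at_right 0)"
  proof (rule tannerys_theorem[where M = "\<lambda>k. 2 * (c k * 5 ^ k)", THEN conjunct2, THEN conjunct2])
    show "((\<lambda>\<delta>. c k * min (2 * 5 ^ k) (8 * fact k * 5 ^ k * \<delta>)) \<longlongrightarrow> 0) (at_right 0)" for k
    proof -
      have "((\<lambda>\<delta>. c k * min (2 * 5 ^ k) (8 * fact k * 5 ^ k * \<delta>))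
          \<longlongrightarrow> c k * min (2 * 5 ^ k) (8 * fact k * 5 ^ k * 0)) (at_right 0)"
        by (intro tendsto_intros)
      then show ?thesis
        by simp
    qed
    have "eventually (\<lambda>(k, \<delta>::real). 0 < \<delta>) (at_top \<times>\<^sub>F at_right 0)"
      using eventually_prodI[OF always_eventually[of "\<lambda>_. True"] eventually_at_right_real[of 0 1], of at_top]
      by (rule eventually_mono) auto
    then show "eventually (\<lambda>(k, \<delta>). norm (c k * min (2 * 5 ^ k) (8 * fact k * 5 ^ k * \<delta>)) \<le> 2 * (c k * 5 ^ k))
        (at_top \<times>\<^sub>F at_right 0)"
    proof (rule eventually_mono, clarify)
      fix k and \<delta> :: real
      assume "0 < \<delta>"
      then show "norm (c k * min (2 * 5 ^ k) (8 * fact k * 5 ^ k * \<delta>)) \<le> 2 * (c k * 5 ^ k)"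
        using abs_mult_min_le[of "c k" "2 * 5 ^ k" "8 * fact k * 5 ^ k * \<delta>"] by (simp add: c_def mult_ac)
    qed
    show "summable (\<lambda>k. 2 * (c k * 5 ^ k))"
      unfolding c_def by (intro summable_mult entire_taylor_summable[OF H]) simp
  qed simp
  then show ?thesis
    unfolding entire_supershift_error_def[abs_def] c_def by simp
qed

lemma supershift_S_entire_uniform:
  fixes H :: "complex \<Rightarrow> complex"
  assumes H: "H holomorphic_on UNIV"
    and E: "\<forall>eps\<in>E. admissible_seq eps"
    and small: "\<forall>\<delta>>0. eventually (\<lambda>N. \<forall>eps\<in>E. eps N < \<delta>) sequentially"
    and "\<epsilon> > 0"
  shows "eventually (\<lambda>N. \<forall>eps\<in>E. \<forall>a a'. \<bar>a\<bar> \<le> 2 \<longrightarrow> \<bar>a'\<bar> \<le> 2 \<longrightarrow>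
           norm (supershift_S eps (\<lambda>t. H (of_real t)) N a a' - H (of_real (a + a'))) < \<epsilon>) sequentially"
proof -
  obtain \<delta> where "\<delta> > 0" and \<delta>: "\<And>x. 0 < x \<Longrightarrow> x < \<delta> \<Longrightarrow> entire_supershift_error H x < \<epsilon>"
    using order_tendstoD(2)[OF entire_supershift_error_tendsto[OF H] \<open>\<epsilon> > 0\<close>]
    unfolding eventually_at_right_field by auto
  show ?thesis
    using eventually_uniformly_small[OF small \<open>\<delta> > 0\<close>]
  proof (rule eventually_mono, intro ballI allI impI)
    fix N eps and a a' :: real
    assume N: "N \<ge> 1 \<and> (\<forall>eps\<in>E. 1 / real N + eps N < \<delta>)" and "eps \<in> E" "\<bar>a\<bar> \<le> 2" "\<bar>a'\<bar> \<le> 2"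
    moreover have "0 \<le> eps N" "eps N < 1"
      using E N \<open>eps \<in> E\<close> unfolding admissible_seq_def by auto
    ultimately show "norm (supershift_S eps (\<lambda>t. H (of_real t)) N a a' - H (of_real (a + a'))) < \<epsilon>"
      using norm_supershift_S_entire_le[OF H, of N eps a a'] \<delta>[of "1 / real N + eps N"]
      by (auto simp: add_pos_nonneg)
  qed
qed

section \<open>Continuous functions\<close>

lemma norm_diff_le_quadratic:
  fixes f :: "real \<Rightarrow> 'a::real_normed_vector"
  assumes bounded: "\<forall>x\<in>S. norm (f x) \<le> M"
    and modulus: "\<forall>x\<in>S. \<forall>y\<in>S. dist x y < d \<longrightarrow> dist (f x) (f y) < e"
    and "0 < d" "x \<in> S" "y \<in> S"
  shows "norm (f x - f y) \<le> e + 2 * M / d\<^sup>2 * (x - y)\<^sup>2"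
proof -
  have "0 \<le> e"
    using modulus \<open>0 < d\<close> \<open>x \<in> S\<close> by fastforce
  have "0 \<le> M"
    using bounded \<open>x \<in> S\<close> norm_ge_zero order_trans by blast
  show ?thesis
  proof (cases "dist x y < d")
    case True
    then have "norm (f x - f y) < e"
      using modulus assms(4,5) by (simp add: dist_norm)
    moreover have "0 \<le> 2 * M / d\<^sup>2 * (x - y)\<^sup>2"
      using \<open>0 \<le> M\<close> by simp
    ultimately show ?thesis
      by linarith
  next
    case False
    then have "1 \<le> (x - y)\<^sup>2 / d\<^sup>2"
      using \<open>0 < d\<close> by (simp add: dist_real_def abs_le_square_iff[symmetric] not_less)
    then have "2 * M \<le> 2 * M / d\<^sup>2 * (x - y)\<^sup>2"
      using \<open>0 \<le> M\<close> mult_left_mono[of 1 "(x - y)\<^sup>2 / d\<^sup>2" "2 * M"] by simp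
    moreover have "norm (f x) \<le> M" "norm (f y) \<le> M"
      using bounded assms(4,5) by auto
    then have "norm (f x - f y) \<le> 2 * M"
      using norm_triangle_ineq4[of "f x" "f y"] by linarith
    ultimately show ?thesis
      using \<open>0 \<le> e\<close> by linarith
  qed
qed

lemma norm_supershift_S_continuous_le:
  fixes psi :: "real \<Rightarrow> complex"
  assumes bounded: "\<forall>x\<in>{-2..2}. norm (psi x) \<le> M"
    and modulus: "\<forall>x\<in>{-2..2}. \<forall>y\<in>{-2..2}. dist x y < d \<longrightarrow> dist (psi x) (psi y) < e" and "0 < d"
    and N: "N \<ge> 1" and e: "0 \<le> eps N" "eps N < 1" and a: "\<bar>a\<bar> \<le> 1" "\<bar>a'\<bar> \<le> 1"
  shows "norm (supershift_S eps psi N a a' - psi (a + a')) \<le> e + 800 * M / d\<^sup>2 * (1 / real N + eps N)"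
proof -
  define w where "w \<nu> = Bernstein N \<nu> ((1 - a) / 2)" for \<nu>
  define K where "K = 2 * M / d\<^sup>2"
  have w: "0 \<le> w \<nu>" for \<nu>
    unfolding w_def using a by (intro Bernstein_nonneg) auto
  have "0 \<le> M"
    using bounded norm_ge_zero[of "psi 0"] by (metis atLeastAtMost_iff order_trans neg_le_0_iff_le zero_le_numeral)
  have in_range: "a' + shift_h eps N \<nu> \<in> {-2..2}" if "\<nu> \<le> N" for \<nu>
    using shift_h_bounds[of N eps \<nu>] N e that a by auto
  have "a + a' \<in> {-2..2}"
    using a by auto
  have "supershift_S eps psi N a a' - psi (a + a')
      = (\<Sum>\<nu>\<le>N. of_real (w \<nu>) * (psi (a' + shift_h eps N \<nu>) - psi (a + a')))"
    unfolding supershift_S_Bernstein w_def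
    by (simp add: right_diff_distrib sum_subtractf flip: sum_distrib_right of_real_sum)
  also have "norm \<dots> \<le> (\<Sum>\<nu>\<le>N. w \<nu> * (e + K * (-a + shift_h eps N \<nu>)\<^sup>2))"
  proof (intro order_trans[OF norm_sum] sum_mono)
    fix \<nu> assume "\<nu> \<in> {..N}"
    then have "norm (psi (a' + shift_h eps N \<nu>) - psi (a + a')) \<le> e + K * (-a + shift_h eps N \<nu>)\<^sup>2"
      using norm_diff_le_quadratic[OF bounded modulus \<open>0 < d\<close> in_range \<open>a + a' \<in> {-2..2}\<close>]
      unfolding K_def by (simp add: algebra_simps)
    then show "norm (of_real (w \<nu>) * (psi (a' + shift_h eps N \<nu>) - psi (a + a')))
        \<le> w \<nu> * (e + K * (-a + shift_h eps N \<nu>)\<^sup>2)"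
      unfolding norm_mult norm_of_real abs_of_nonneg[OF w] by (intro mult_left_mono w)
  qed
  also have "\<dots> = e + K * (\<Sum>\<nu>\<le>N. w \<nu> * (-a + shift_h eps N \<nu>)\<^sup>2)"
    unfolding w_def by (simp add: distrib_left sum.distrib mult_ac flip: sum_distrib_left sum_distrib_right)
  also have "\<dots> \<le> e + K * (400 * (1 / real N + eps N))"
    using Bernstein_shift_moment_error[of N eps a "-a" 2] N e a \<open>0 \<le> M\<close>
    unfolding w_def K_def by (intro add_left_mono mult_left_mono) (auto simp: fact_numeral)
  also have "\<dots> = e + 800 * M / d\<^sup>2 * (1 / real N + eps N)"
    unfolding K_def by simp
  finally show ?thesis .
qed

lemma supershift_S_continuous_uniform:
  fixes psi :: "real \<Rightarrow> complex"
  assumes psi: "continuous_on {-2..2} psi"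
    and E: "\<forall>eps\<in>E. admissible_seq eps"
    and small: "\<forall>\<delta>>0. eventually (\<lambda>N. \<forall>eps\<in>E. eps N < \<delta>) sequentially"
    and "\<epsilon> > 0"
  shows "eventually (\<lambda>N. \<forall>eps\<in>E. \<forall>a a'. \<bar>a\<bar> \<le> 1 \<longrightarrow> \<bar>a'\<bar> \<le> 1 \<longrightarrow>
           norm (supershift_S eps psi N a a' - psi (a + a')) < \<epsilon>) sequentially"
proof -
  obtain M where M: "\<forall>x\<in>{-2..2}. norm (psi x) \<le> M"
    using compact_imp_bounded[OF compact_continuous_image[OF psi compact_Icc]] unfolding bounded_iff by auto
  obtain d where "d > 0" and d: "\<forall>x\<in>{-2..2}. \<forall>y\<in>{-2..2}. dist x y < d \<longrightarrow> dist (psi x) (psi y) < \<epsilon> / 2"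
    using compact_uniformly_continuous[OF psi compact_Icc] \<open>\<epsilon> > 0\<close>
    unfolding uniformly_continuous_on_def by (meson half_gt_zero)
  define K where "K = 800 * \<bar>M\<bar> / d\<^sup>2"
  have "0 \<le> K"
    unfolding K_def by simp
  define \<delta> where "\<delta> = \<epsilon> / (2 * (K + 1))"
  have "\<delta> > 0" "K * \<delta> < \<epsilon> / 2"
    using \<open>0 \<le> K\<close> \<open>\<epsilon> > 0\<close> unfolding \<delta>_def by (auto simp: field_simps)
  show ?thesis
    using eventually_uniformly_small[OF small \<open>\<delta> > 0\<close>]
  proof (rule eventually_mono, intro ballI allI impI)
    fix N eps and a a' :: real
    assume N: "N \<ge> 1 \<and> (\<forall>eps\<in>E. 1 / real N + eps N < \<delta>)" and "eps \<in> E" "\<bar>a\<bar> \<le> 1" "\<bar>a'\<bar> \<le> 1"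
    moreover have "0 \<le> eps N" "eps N < 1"
      using E N \<open>eps \<in> E\<close> unfolding admissible_seq_def by auto
    moreover have "\<forall>x\<in>{-2..2}. norm (psi x) \<le> \<bar>M\<bar>"
      using M by force
    ultimately have "norm (supershift_S eps psi N a a' - psi (a + a')) \<le> \<epsilon> / 2 + K * (1 / real N + eps N)"
      using norm_supershift_S_continuous_le[OF _ d \<open>d > 0\<close>, of "\<bar>M\<bar>" N eps a a'] unfolding K_def by simp
    also have "\<dots> < \<epsilon> / 2 + \<epsilon> / 2"
      using N \<open>eps \<in> E\<close> \<open>0 \<le> K\<close> \<open>K * \<delta> < \<epsilon> / 2\<close> mult_left_mono[of "1 / real N + eps N" \<delta> K] by auto
    finally show "norm (supershift_S eps psi N a a' - psi (a + a')) < \<epsilon>"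
      by simp
  qed
qed

section \<open>Exponentially small weights\<close>

text \<open>The constant is 31/45 = 2 \<cdot> (1/3) \<cdot> (31/30).\<close>
lemma binomial_power_term_le:
  fixes u v :: real
  assumes "0 \<le> v" "v \<le> 31/30" "\<bar>u\<bar> \<le> 1/27" "j \<le> N" "N \<le> 3 * j"
  shows "real (N choose i) * \<bar>u\<bar> ^ j * v ^ (N - j) \<le> (31/45) ^ N"
proof -
  have "real (N choose i) \<le> 2 ^ N"
    by (metis binomial_le_pow2 of_nat_le_iff of_nat_numeral of_nat_power)
  moreover have "\<bar>u\<bar> ^ j \<le> (1/3) ^ N"
  proof -
    have "\<bar>u\<bar> ^ j \<le> (1/27) ^ j"
      using assms(3) by (intro power_mono) auto
    also have "(1/27 :: real) ^ j = (1/3) ^ (3 * j)"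
      by (simp add: power_mult power_divide)
    also have "\<dots> \<le> (1/3) ^ N"
      using assms(5) by (intro power_decreasing) auto
    finally show ?thesis .
  qed
  moreover have "v ^ (N - j) \<le> (31/30) ^ N"
  proof -
    have "v ^ (N - j) \<le> (31/30) ^ (N - j)"
      using assms(1,2) by (intro power_mono) auto
    also have "\<dots> \<le> (31/30) ^ N"
      by (intro power_increasing) auto
    finally show ?thesis .
  qed
  ultimately have "real (N choose i) * \<bar>u\<bar> ^ j * v ^ (N - j) \<le> 2 ^ N * (1/3) ^ N * (31/30) ^ N"
    using assms(1) by (intro mult_mono) auto
  also have "\<dots> = (31/45) ^ N"
    by (simp add: power_mult_distrib[symmetric])
  finally show ?thesis .
qed

text \<open>A grid point on the wrong side of 0 forces \<nu> \<ge> N/3 (resp. N - \<nu> \<ge> N/3), and the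
  corresponding factor of the weight is at most 1/30.\<close>
lemma Bernstein_small_if_shift_negative:
  assumes N: "N \<ge> 1" and e: "0 \<le> eps N" "eps N \<le> 1/10" and "\<nu> \<le> N"
    and a': "-1/30 < a'" and neg: "a' + shift_h eps N \<nu> < 0" and a: "1 \<le> a" "a \<le> 16/15"
  shows "\<bar>Bernstein N \<nu> ((1 - a) / 2)\<bar> \<le> (31/45) ^ N"
proof -
  define X where "X = eps N * (real N - real \<nu>)"
  have "1 - 2 * (real \<nu> + X) / real N < 1/30"
    using neg a' unfolding shift_h_def X_def by linarith
  then have "29/30 * real N < 2 * real \<nu> + 2 * X"
    using N by (simp add: field_simps)
  moreover have "X \<le> 1/10 * real N"
    unfolding X_def using e \<open>\<nu> \<le> N\<close> by (intro mult_mono) auto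
  ultimately have "real N \<le> 3 * real \<nu>"
    by linarith
  then have "N \<le> 3 * \<nu>"
    by linarith
  have "\<bar>Bernstein N \<nu> ((1 - a) / 2)\<bar> = real (N choose \<nu>) * \<bar>(1 - a) / 2\<bar> ^ \<nu> * ((1 + a) / 2) ^ (N - \<nu>)"
    unfolding Bernstein_def using a by (simp add: abs_mult power_abs field_simps)
  moreover have "real (N choose \<nu>) * \<bar>(1 - a) / 2\<bar> ^ \<nu> * ((1 + a) / 2) ^ (N - \<nu>) \<le> (31/45) ^ N"
    by (rule binomial_power_term_le) (use a \<open>\<nu> \<le> N\<close> \<open>N \<le> 3 * \<nu>\<close> in auto)
  ultimately show ?thesis
    by simp
qed

lemma Bernstein_small_if_shift_nonneg:
  assumes N: "N \<ge> 1" and e: "0 \<le> eps N" and "\<nu> \<le> N"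
    and a': "a' < 1/30" and nonneg: "0 \<le> a' + shift_h eps N \<nu>" and a: "-16/15 \<le> a" "a \<le> -1"
  shows "\<bar>Bernstein N \<nu> ((1 - a) / 2)\<bar> \<le> (31/45) ^ N"
proof -
  define X where "X = eps N * (real N - real \<nu>)"
  have "-1/30 \<le> 1 - 2 * (real \<nu> + X) / real N"
    using nonneg a' unfolding shift_h_def X_def by linarith
  then have "2 * real \<nu> + 2 * X \<le> 31/30 * real N"
    using N by (simp add: field_simps)
  moreover have "0 \<le> X"
    unfolding X_def using e \<open>\<nu> \<le> N\<close> by simp
  ultimately have "3 * real \<nu> \<le> 2 * real N"
    by linarith
  then have "N \<le> 3 * (N - \<nu>)"
    using \<open>\<nu> \<le> N\<close> by linarith
  have "\<bar>Bernstein N \<nu> ((1 - a) / 2)\<bar> = real (N choose \<nu>) * \<bar>(1 + a) / 2\<bar> ^ (N - \<nu>) * ((1 - a) / 2) ^ (N - (N - \<nu>))"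
    unfolding Bernstein_def using a \<open>\<nu> \<le> N\<close> by (simp add: abs_mult power_abs field_simps)
  moreover have "real (N choose \<nu>) * \<bar>(1 + a) / 2\<bar> ^ (N - \<nu>) * ((1 - a) / 2) ^ (N - (N - \<nu>)) \<le> (31/45) ^ N"
    by (rule binomial_power_term_le) (use a \<open>N \<le> 3 * (N - \<nu>)\<close> in auto)
  ultimately show ?thesis
    by simp
qed

lemma norm_supershift_S_diff_le:
  fixes psi phi :: "real \<Rightarrow> complex"
  assumes differ: "\<And>\<nu>. \<nu> \<le> N \<Longrightarrow> psi (a' + shift_h eps N \<nu>) \<noteq> phi (a' + shift_h eps N \<nu>) \<Longrightarrow>
      \<bar>Bernstein N \<nu> ((1 - a) / 2)\<bar> \<le> w \<and> norm (psi (a' + shift_h eps N \<nu>) - phi (a' + shift_h eps N \<nu>)) \<le> M"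
    and "0 \<le> w" "0 \<le> M"
  shows "norm (supershift_S eps psi N a a' - supershift_S eps phi N a a') \<le> (real N + 1) * w * M"
proof -
  have "supershift_S eps psi N a a' - supershift_S eps phi N a a'
      = (\<Sum>\<nu>\<le>N. of_real (Bernstein N \<nu> ((1 - a) / 2)) * (psi (a' + shift_h eps N \<nu>) - phi (a' + shift_h eps N \<nu>)))"
    unfolding supershift_S_Bernstein by (simp add: sum_subtractf right_diff_distrib)
  also have "norm \<dots> \<le> (\<Sum>\<nu>\<le>N. w * M)"
  proof (intro order_trans[OF norm_sum] sum_mono)
    fix \<nu> assume "\<nu> \<in> {..N}"
    then show "norm (of_real (Bernstein N \<nu> ((1 - a) / 2)) * (psi (a' + shift_h eps N \<nu>) - phi (a' + shift_h eps N \<nu>)))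
        \<le> w * M"
      using differ[of \<nu>] \<open>0 \<le> w\<close> \<open>0 \<le> M\<close>
      by (cases "psi (a' + shift_h eps N \<nu>) = phi (a' + shift_h eps N \<nu>)") (auto simp: norm_mult intro: mult_mono)
  qed
  also have "\<dots> = (real N + 1) * w * M"
    by simp
  finally show ?thesis .
qed

lemma eventually_tail_small:
  assumes "\<epsilon> > 0"
  shows "eventually (\<lambda>N. (real N + 1) * (31/45) ^ N * M < \<epsilon>) sequentially"
proof -
  have "(\<lambda>N. real N * (31/45::real) ^ N + (31/45) ^ N) \<longlonglongrightarrow> 0 + 0"
    by (intro tendsto_add powser_times_n_limit_0 LIMSEQ_power_zero) auto
  then have "(\<lambda>N. (real N + 1) * (31/45::real) ^ N * M) \<longlonglongrightarrow> 0 * M"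
    by (intro tendsto_mult tendsto_const) (simp add: distrib_right)
  then show ?thesis
    using order_tendstoD(2) assms by fastforce
qed

lemma supershift_S_tail_uniform:
  fixes psi phi :: "real \<Rightarrow> complex" and R :: "real \<Rightarrow> real \<Rightarrow> bool"
  assumes cont: "continuous_on {-2..2} psi" "continuous_on {-2..2} phi"
    and R: "\<And>a a'. R a a' \<Longrightarrow> \<bar>a'\<bar> \<le> 1"
    and weights: "\<And>N eps \<nu> a a'. N \<ge> 1 \<Longrightarrow> 0 \<le> eps N \<Longrightarrow> eps N \<le> 1/10 \<Longrightarrow> \<nu> \<le> N \<Longrightarrow> R a a' \<Longrightarrow>
        psi (a' + shift_h eps N \<nu>) \<noteq> phi (a' + shift_h eps N \<nu>) \<Longrightarrow> \<bar>Bernstein N \<nu> ((1 - a) / 2)\<bar> \<le> (31/45) ^ N"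
    and E: "\<forall>eps\<in>E. admissible_seq eps"
    and small: "\<forall>\<delta>>0. eventually (\<lambda>N. \<forall>eps\<in>E. eps N < \<delta>) sequentially"
    and "\<epsilon> > 0"
  shows "eventually (\<lambda>N. \<forall>eps\<in>E. \<forall>a a'. R a a' \<longrightarrow>
           norm (supershift_S eps psi N a a' - supershift_S eps phi N a a') < \<epsilon>) sequentially"
proof -
  obtain M where M: "\<forall>x\<in>{-2..2}. norm (psi x - phi x) \<le> M" "0 \<le> M"
    using compact_imp_bounded[OF compact_continuous_image[OF continuous_on_diff[OF cont] compact_Icc]]
    unfolding bounded_iff by (meson atLeastAtMost_iff imageI norm_ge_zero order_trans neg_le_0_iff_le zero_le_numeral)
  have "eventually (\<lambda>N. N \<ge> 1 \<and> (\<forall>eps\<in>E. 1 / real N + eps N < 1/10)) sequentially"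
    by (rule eventually_uniformly_small[OF small]) simp
  from eventually_conj[OF this eventually_tail_small[OF \<open>\<epsilon> > 0\<close>, of M]] show ?thesis
  proof (rule eventually_mono, intro ballI allI impI)
    fix N eps and a a' :: real
    assume N: "(N \<ge> 1 \<and> (\<forall>eps\<in>E. 1 / real N + eps N < 1/10)) \<and> (real N + 1) * (31/45) ^ N * M < \<epsilon>"
      and "eps \<in> E" and "R a a'"
    have "1 / real N + eps N < 1/10" "0 \<le> 1 / real N"
      using N \<open>eps \<in> E\<close> by auto
    moreover have "0 \<le> eps N" "eps N < 1"
      using E N \<open>eps \<in> E\<close> unfolding admissible_seq_def by auto
    ultimately have e: "0 \<le> eps N" "eps N \<le> 1/10" "eps N < 1"
      by linarith+
    have "norm (supershift_S eps psi N a a' - supershift_S eps phi N a a') \<le> (real N + 1) * (31/45) ^ N * M"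
    proof (rule norm_supershift_S_diff_le[OF _ _ \<open>0 \<le> M\<close>])
      fix \<nu> assume "\<nu> \<le> N" and "psi (a' + shift_h eps N \<nu>) \<noteq> phi (a' + shift_h eps N \<nu>)"
      moreover have "a' + shift_h eps N \<nu> \<in> {-2..2}"
        using shift_h_bounds[of N eps \<nu>] N e \<open>\<nu> \<le> N\<close> R[OF \<open>R a a'\<close>] by auto
      ultimately show "\<bar>Bernstein N \<nu> ((1 - a) / 2)\<bar> \<le> (31/45) ^ N \<and>
          norm (psi (a' + shift_h eps N \<nu>) - phi (a' + shift_h eps N \<nu>)) \<le> M"
        using weights N e \<open>R a a'\<close> M by blast
    qed simp
    then show "norm (supershift_S eps psi N a a' - supershift_S eps phi N a a') < \<epsilon>"
      using N by linarith
  qed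
qed

section \<open>The glued function\<close>

lemma mem_dom_A_interval:
  assumes "(a, a') \<in> dom_A {-1 - \<rho> <..< 1 + \<rho>}"
  shows "\<bar>a'\<bar> < \<rho>" "-1 - \<rho> < a + a'" "a + a' < 1 + \<rho>"
proof -
  have "{a' - 1 .. a' + 1} \<subseteq> {-1 - \<rho> <..< 1 + \<rho>}" "a + a' \<in> {-1 - \<rho> <..< 1 + \<rho>}"
    using assms unfolding dom_A_def by auto
  moreover have "a' - 1 \<in> {a' - 1 .. a' + 1}" "a' + 1 \<in> {a' - 1 .. a' + 1}"
    by auto
  ultimately have "a' - 1 \<in> {-1 - \<rho> <..< 1 + \<rho>}" "a' + 1 \<in> {-1 - \<rho> <..< 1 + \<rho>}" "a + a' \<in> {-1 - \<rho> <..< 1 + \<rho>}"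
    by blast+
  then show "\<bar>a'\<bar> < \<rho>" "-1 - \<rho> < a + a'" "a + a' < 1 + \<rho>"
    by auto
qed

text \<open>Condition (1) is condition (2) for the one-element family.\<close>
lemma regular_C_supershiftI:
  assumes "continuous_on A psi"
    and uniform: "\<And>E \<epsilon>. \<forall>eps\<in>E. admissible_seq eps \<Longrightarrow>
        \<forall>\<delta>>0. eventually (\<lambda>N. \<forall>eps\<in>E. eps N < \<delta>) sequentially \<Longrightarrow> \<epsilon> > 0 \<Longrightarrow>
        eventually (\<lambda>N. \<forall>eps\<in>E. \<forall>(a, a')\<in>dom_A A. norm (supershift_S eps psi N a a' - psi (a + a')) < \<epsilon>) sequentially"
  shows "regular_C_supershift A psi"
  unfolding regular_C_supershift_def
proof (intro conjI allI impI assms(1))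
  fix E :: "(nat \<Rightarrow> real) set" and K and \<epsilon> :: real
  assume "(\<forall>eps\<in>E. admissible_seq eps) \<and> (\<forall>\<delta>>0. \<forall>\<^sub>F N in sequentially. \<forall>eps\<in>E. eps N < \<delta>)"
    and K: "compact K \<and> K \<subseteq> dom_A A" and "\<epsilon> > 0"
  then have "eventually (\<lambda>N. \<forall>eps\<in>E. \<forall>(a, a')\<in>dom_A A. norm (supershift_S eps psi N a a' - psi (a + a')) < \<epsilon>) sequentially"
    using uniform[of E \<epsilon>] by blast
  then show "\<forall>\<^sub>F N in sequentially. \<forall>eps\<in>E. \<forall>(a, a')\<in>K. norm (supershift_S eps psi N a a' - psi (a + a')) < \<epsilon>"
    by (rule eventually_mono) (use K in blast)
next
  fix eps K
  assume adm: "admissible_seq eps" and K: "compact K \<and> K \<subseteq> dom_A A"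
  have "\<forall>\<delta>>0. \<forall>\<^sub>F N in sequentially. \<forall>eps'\<in>{eps}. eps' N < \<delta>"
    using adm unfolding admissible_seq_def by (auto dest: order_tendstoD(2))
  then have "eventually (\<lambda>N. \<forall>(a, a')\<in>K. dist (supershift_S eps psi N a a') (psi (a + a')) < \<epsilon>) sequentially"
    if "\<epsilon> > 0" for \<epsilon>
    using uniform[of "{eps}" \<epsilon>] adm K that by (auto simp: dist_norm elim!: eventually_mono)
  then show "uniform_limit K (\<lambda>N (a, a'). supershift_S eps psi N a a') (\<lambda>(a, a'). psi (a + a')) sequentially"
    by (intro uniform_limitI) (simp add: case_prod_unfold)
qed

lemma continuous_on_of_real_entire:
  fixes H :: "complex \<Rightarrow> complex"
  assumes "H holomorphic_on UNIV"
  shows "continuous_on S (\<lambda>t. H (of_real t))"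
  by (rule continuous_on_compose2[OF holomorphic_on_imp_continuous_on[OF assms]]) (auto intro!: continuous_intros)

lemma continuous_on_glued_entire:
  fixes Hm Hp :: "complex \<Rightarrow> complex"
  assumes "Hm holomorphic_on UNIV" "Hp holomorphic_on UNIV" "Hm 0 = Hp 0"
  shows "continuous_on S (\<lambda>t. if t < 0 then Hm (of_real t) else Hp (of_real t))"
proof -
  have "continuous_on S (\<lambda>t. if t \<le> 0 then Hm (of_real t) else Hp (of_real t))"
    by (rule continuous_on_cases_le[OF continuous_on_of_real_entire[OF assms(1)] continuous_on_of_real_entire[OF assms(2)]]) (auto simp: assms(3) intro: continuous_intros)
  moreover have "(\<lambda>t. if t < 0 then Hm (of_real t) else Hp (of_real t))
      = (\<lambda>t. if t \<le> 0 then Hm (of_real t) else Hp (of_real t))"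
    using assms(3) by (auto simp: fun_eq_iff)
  ultimately show ?thesis
    by metis
qed

lemma supershift_S_glued_tails_uniform:
  fixes Hm Hp :: "complex \<Rightarrow> complex"
  defines "psi \<equiv> \<lambda>t. if t < 0 then Hm (of_real t) else Hp (of_real t)"
  assumes Hm: "Hm holomorphic_on UNIV" and Hp: "Hp holomorphic_on UNIV" and glue: "Hm 0 = Hp 0"
    and E: "\<forall>eps\<in>E. admissible_seq eps"
    and small: "\<forall>\<delta>>0. eventually (\<lambda>N. \<forall>eps\<in>E. eps N < \<delta>) sequentially" and "\<epsilon> > 0"
  shows "eventually (\<lambda>N. \<forall>eps\<in>E. \<forall>a a'. -16/15 \<le> a \<and> a \<le> -1 \<and> \<bar>a'\<bar> < 1/30 \<longrightarrow>
      norm (supershift_S eps psi N a a' - supershift_S eps (\<lambda>t. Hm (of_real t)) N a a') < \<epsilon>) sequentially"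
    and "eventually (\<lambda>N. \<forall>eps\<in>E. \<forall>a a'. 1 \<le> a \<and> a \<le> 16/15 \<and> \<bar>a'\<bar> < 1/30 \<longrightarrow>
      norm (supershift_S eps psi N a a' - supershift_S eps (\<lambda>t. Hp (of_real t)) N a a') < \<epsilon>) sequentially"
proof -
  note cont = continuous_on_glued_entire[OF Hm Hp glue, folded psi_def]
    continuous_on_of_real_entire[OF Hm] continuous_on_of_real_entire[OF Hp]
  show "eventually (\<lambda>N. \<forall>eps\<in>E. \<forall>a a'. -16/15 \<le> a \<and> a \<le> -1 \<and> \<bar>a'\<bar> < 1/30 \<longrightarrow>
      norm (supershift_S eps psi N a a' - supershift_S eps (\<lambda>t. Hm (of_real t)) N a a') < \<epsilon>) sequentially"
  proof (rule supershift_S_tail_uniform[OF cont(1,2) _ _ E small \<open>\<epsilon> > 0\<close>])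
    fix N eps \<nu> and a a' :: real
    assume "N \<ge> 1" "0 \<le> eps N" "\<nu> \<le> N" and "-16/15 \<le> a \<and> a \<le> -1 \<and> \<bar>a'\<bar> < 1/30"
      and "psi (a' + shift_h eps N \<nu>) \<noteq> Hm (of_real (a' + shift_h eps N \<nu>))"
    then show "\<bar>Bernstein N \<nu> ((1 - a) / 2)\<bar> \<le> (31/45) ^ N"
      using Bernstein_small_if_shift_nonneg[of N eps \<nu> a' a] by (auto simp: psi_def abs_less_iff split: if_splits)
  qed auto
  show "eventually (\<lambda>N. \<forall>eps\<in>E. \<forall>a a'. 1 \<le> a \<and> a \<le> 16/15 \<and> \<bar>a'\<bar> < 1/30 \<longrightarrow>
      norm (supershift_S eps psi N a a' - supershift_S eps (\<lambda>t. Hp (of_real t)) N a a') < \<epsilon>) sequentially"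
  proof (rule supershift_S_tail_uniform[OF cont(1,3) _ _ E small \<open>\<epsilon> > 0\<close>])
    fix N eps \<nu> and a a' :: real
    assume "N \<ge> 1" "0 \<le> eps N" "eps N \<le> 1/10" "\<nu> \<le> N" and "1 \<le> a \<and> a \<le> 16/15 \<and> \<bar>a'\<bar> < 1/30"
      and "psi (a' + shift_h eps N \<nu>) \<noteq> Hp (of_real (a' + shift_h eps N \<nu>))"
    then show "\<bar>Bernstein N \<nu> ((1 - a) / 2)\<bar> \<le> (31/45) ^ N"
      using Bernstein_small_if_shift_negative[of N eps \<nu> a' a] by (auto simp: psi_def abs_less_iff split: if_splits)
  qed auto
qed

lemma regular_C_supershift_glued_entire:
  fixes Hm Hp :: "complex \<Rightarrow> complex"
  assumes Hm: "Hm holomorphic_on UNIV" and Hp: "Hp holomorphic_on UNIV" and glue: "Hm 0 = Hp 0"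
  shows "regular_C_supershift {-1 - 1/30 <..< 1 + 1/30}
           (\<lambda>t. if t < 0 then Hm (of_real t) else Hp (of_real t))"
    (is "regular_C_supershift ?A ?psi")
proof (rule regular_C_supershiftI[OF continuous_on_glued_entire[OF assms]])
  fix E and \<epsilon> :: real
  assume E: "\<forall>eps\<in>E. admissible_seq eps"
    and small: "\<forall>\<delta>>0. eventually (\<lambda>N. \<forall>eps\<in>E. eps N < \<delta>) sequentially" and "\<epsilon> > 0"
  then have "\<epsilon> / 2 > 0"
    by simp
  note tails = supershift_S_glued_tails_uniform[OF assms E small \<open>\<epsilon> / 2 > 0\<close>]
  show "eventually (\<lambda>N. \<forall>eps\<in>E. \<forall>(a, a')\<in>dom_A ?A. norm (supershift_S eps ?psi N a a' - ?psi (a + a')) < \<epsilon>) sequentially"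
    using supershift_S_continuous_uniform[OF continuous_on_glued_entire[OF assms] E small \<open>\<epsilon> > 0\<close>]
      supershift_S_entire_uniform[OF Hm E small \<open>\<epsilon> / 2 > 0\<close>]
      supershift_S_entire_uniform[OF Hp E small \<open>\<epsilon> / 2 > 0\<close>] tails
  proof eventually_elim
    case (elim N)
    show ?case
    proof (intro ballI, clarify)
      fix eps a a'
      assume "eps \<in> E" and "(a, a') \<in> dom_A ?A"
      note a' = mem_dom_A_interval[OF this(2)]
      consider "\<bar>a\<bar> \<le> 1" | "1 \<le> a" | "a \<le> -1"
        by linarith
      then show "norm (supershift_S eps ?psi N a a' - ?psi (a + a')) < \<epsilon>"
      proof cases
        case 1
        then show ?thesis
          using elim(1) \<open>eps \<in> E\<close> a' by auto
      next
        case 2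
        then have "norm (supershift_S eps ?psi N a a' - supershift_S eps (\<lambda>t. Hp (of_real t)) N a a') < \<epsilon> / 2"
            "norm (supershift_S eps (\<lambda>t. Hp (of_real t)) N a a' - Hp (of_real (a + a'))) < \<epsilon> / 2"
          using elim(3,5) \<open>eps \<in> E\<close> a' by auto
        moreover have "?psi (a + a') = Hp (of_real (a + a'))"
          using 2 a' by auto
        ultimately show ?thesis
          using norm_diff_triangle_less by fastforce
      next
        case 3
        then have "norm (supershift_S eps ?psi N a a' - supershift_S eps (\<lambda>t. Hm (of_real t)) N a a') < \<epsilon> / 2"
            "norm (supershift_S eps (\<lambda>t. Hm (of_real t)) N a a' - Hm (of_real (a + a'))) < \<epsilon> / 2"
          using elim(2,4) \<open>eps \<in> E\<close> a' by auto
        moreover have "?psi (a + a') = Hm (of_real (a + a'))"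
          using 3 a' by auto
        ultimately show ?thesis
          using norm_diff_triangle_less by fastforce
      qed
    qed
  qed
qed

lemma not_differentiable_at_glued:
  fixes f g :: "real \<Rightarrow> 'a::real_normed_vector"
  assumes f: "(f has_vector_derivative f') (at x)" and g: "(g has_vector_derivative g') (at x)"
    and "f x = g x" "f' \<noteq> g'"
  shows "\<not> (\<lambda>t. if t < x then f t else g t) differentiable (at x)"
proof
  define h where "h t = (if t < x then f t else g t)" for t
  assume "h differentiable (at x)"
  then have D: "(h has_vector_derivative vector_derivative h (at x)) (at x)"
    using vector_derivative_works by blast
  have left: "(h has_vector_derivative f') (at x within {..x})"
  proof (rule has_vector_derivative_transform)
    show "h y = f y" if "y \<in> {..x}" for y
      using that \<open>f x = g x\<close> by (cases "y = x") (auto simp: h_def)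
  qed (auto intro: has_vector_derivative_at_within[OF f])
  have right: "(h has_vector_derivative g') (at x within {x..})"
  proof (rule has_vector_derivative_transform)
    show "h y = g y" if "y \<in> {x..}" for y
      using that by (auto simp: h_def)
  qed (auto intro: has_vector_derivative_at_within[OF g])
  have "at_left x \<le> at x within {..x}" "at_right x \<le> at x within {x..}"
    by (auto intro: at_le)
  then have "at x within {..x} \<noteq> bot" "at x within {x..} \<noteq> bot"
    using trivial_limit_at_left_real trivial_limit_at_right_real by (auto simp: bot_unique)
  then have "vector_derivative h (at x) = f'" "vector_derivative h (at x) = g'"
    using vector_derivative_unique_within[OF _ has_vector_derivative_at_within[OF D]] left right by blast+
  with \<open>f' \<noteq> g'\<close> show False
    by simp
qed

lemma has_vector_derivative_entire_half:
  fixes G :: "complex \<Rightarrow> complex"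
  assumes "G holomorphic_on UNIV"
  shows "((\<lambda>t. G (of_real ((1 + t) / 2))) has_vector_derivative deriv G (of_real ((1 + x) / 2)) / 2) (at x)"
proof -
  have "((\<lambda>t. of_real ((1 + t) / 2)) has_vector_derivative (of_real (1/2) :: complex)) (at x)"
    by (rule has_vector_derivative_of_real) (auto intro!: derivative_eq_intros)
  moreover have "(G has_field_derivative deriv G (of_real ((1 + x) / 2))) (at (of_real ((1 + x) / 2)))"
    using holomorphic_derivI[OF assms, of "of_real ((1 + x) / 2)"] by simp
  ultimately have "((G \<circ> (\<lambda>t. of_real ((1 + t) / 2))) has_vector_derivative
      of_real (1/2) * deriv G (of_real ((1 + x) / 2))) (at x)"
    by (rule field_vector_diff_chain_at)
  then show ?thesis
    by (simp add: o_def mult.commute)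
qed

theorem mainTheorem5:
  fixes Gm Gp :: "complex \<Rightarrow> complex"
  assumes "Gm holomorphic_on UNIV" and "Gp holomorphic_on UNIV"
    and "Gm (1/2) = Gp (1/2)"
    and "deriv Gm (1/2) \<noteq> deriv Gp (1/2)"
  shows "\<exists>\<rho>0>0. regular_C_supershift {-1 - \<rho>0 <..< 1 + \<rho>0}
            (\<lambda>a. if (1 + a) / 2 < 1/2 then Gm (complex_of_real ((1 + a) / 2))
                  else Gp (complex_of_real ((1 + a) / 2)))
       \<and> \<not> ((\<lambda>a::real. if (1 + a) / 2 < 1/2 then Gm (complex_of_real ((1 + a) / 2))
                  else Gp (complex_of_real ((1 + a) / 2))) differentiable (at 0))"
    (is "\<exists>\<rho>0>0. regular_C_supershift _ ?psi \<and> _")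
proof (intro exI[of _ "1/30"] conjI)
  define Hm where "Hm z = Gm ((1 + z) / 2)" for z
  define Hp where "Hp z = Gp ((1 + z) / 2)" for z
  have affine: "(\<lambda>z. (1 + z) / 2) holomorphic_on UNIV"
    by (intro holomorphic_intros) simp
  have "Hm holomorphic_on UNIV" "Hp holomorphic_on UNIV"
    unfolding Hm_def Hp_def
    using holomorphic_on_compose[OF affine holomorphic_on_subset[OF assms(1)]]
      holomorphic_on_compose[OF affine holomorphic_on_subset[OF assms(2)]] by (auto simp: o_def)
  moreover have "Hm 0 = Hp 0"
    using assms(3) by (simp add: Hm_def Hp_def)
  moreover have "?psi = (\<lambda>t. if t < 0 then Hm (of_real t) else Hp (of_real t))"
    by (simp add: fun_eq_iff Hm_def Hp_def add_divide_distrib)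
  ultimately show "regular_C_supershift {-1 - 1/30 <..< 1 + 1/30} ?psi"
    by (simp only: regular_C_supershift_glued_entire)
  have "?psi = (\<lambda>t. if t < 0 then Gm (of_real ((1 + t) / 2)) else Gp (of_real ((1 + t) / 2)))"
    by (simp add: fun_eq_iff)
  then show "\<not> ?psi differentiable (at 0)"
    using not_differentiable_at_glued[OF has_vector_derivative_entire_half[OF assms(1)]
        has_vector_derivative_entire_half[OF assms(2)]] assms(3,4) by simp
qed simp

end
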